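(* Assume $\mathfrak p=\mathfrak c$ (e.g. CH). Then there exist a set of reals $X$ of cardinality $\mathfrak c$ and a countable subset $Q\subseteq X$ such that $X$ satisfies $\binom{\Omega}{\Gamma}$ while $X\setminus Q$ does not satisfy $\mathrm{Split}(C_{\mathrm T},C_{\mathrm T})$.
   Context: A set of reals is an infinite topological space homeomorphic to a subset of $\mathbb R$. A cover of a space $X$ is a family $\mathcal U$ of subsets of $X$ with $\bigcup\mathcal U=X$ such that $X\not\subseteq U$ for all $U\in\mathcal U$. A cover $\mathcal U$ is: an $\omega$-cover if every finite subset of $X$ is contained in some member; a $\tau$-cover if every $x\in X$ lies in infinitely many members and for all $x,y\in X$ at least one of $\{U\in\mathcal U: x\in U, y\notin U\}$, $\{U\in\mathcal U: y\in U, x\notin U\}$ is finite; a $\gamma$-cover if it is infinite and each $x\in X$ lies in all but finitely many members. $\Omega,\Gamma$ are the collections of open $\omega$-covers and open $\gamma$-covers of $X$; $C_{\mathrm T}$ is the collection of countable clopen $\tau$-covers of $X$. $X$ satisfies $\binom{\mathfrak U}{\mathfrak V}$ if every $\mathcal U\in\mathfrak U$ has a subfamily in $\mathfrak V$; $X$ satisfies $\mathrm{Split}(\mathfrak U,\mathfrak V)$ if every $\mathcal U\in\mathfrak U$ can be partitioned into two disjoint subfamilies each containing a subfamily in $\mathfrak V$. $\mathfrak p$ is the minimal cardinality of a family $F$ of infinite subsets of $\mathbb N$ such that every finite intersection of members of $F$ is infinite but there is no infinite $a\subseteq\mathbb N$ with $a\setminus y$ finite for all $y\in F$; $\mathfrak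 c=2^{\aleph_0}$. *)

theory Defs
  imports "HOL-Analysis.Analysis"
begin


definition p_family :: "nat set set \<Rightarrow> bool" where
  "p_family F \<longleftrightarrow> (\<forall>y\<in>F. infinite y)
     \<and> (\<forall>G. finite G \<and> G \<noteq> {} \<and> G \<subseteq> F \<longrightarrow> infinite (\<Inter>G))
     \<and> \<not> (\<exists>a. infinite a \<and> (\<forall>y\<in>F. finite (a - y)))"

definition p_eq_c :: bool where
  "p_eq_c \<longleftrightarrow> (\<exists>F. p_family F \<and> ordIso2 (card_of F) (card_of (UNIV :: real set))
                  \<and> (\<forall>G. p_family G \<longrightarrow> ordLeq3 (card_of F) (card_of G)))"

definition is_cover :: "real set \<Rightarrow> real set set \<Rightarrow> bool" where
  "is_cover X U \<longleftrightarrow> (\<forall>u\<in>U. u \<subseteq> X) \<and> \<Union>U = X \<and> (\<forall>u\<in>U. \<not> X \<subseteq> u)"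

definition omega_cover :: "real set \<Rightarrow> real set set \<Rightarrow> bool" where
  "omega_cover X U \<longleftrightarrow> is_cover X U \<and>
     (\<forall>F. finite F \<and> F \<subseteq> X \<longrightarrow> (\<exists>u\<in>U. F \<subseteq> u))"

definition tau_cover :: "real set \<Rightarrow> real set set \<Rightarrow> bool" where
  "tau_cover X U \<longleftrightarrow> is_cover X U \<and>
     (\<forall>x\<in>X. infinite {u\<in>U. x \<in> u}) \<and>
     (\<forall>x\<in>X. \<forall>y\<in>X. finite {u\<in>U. x \<in> u \<and> y \<notin> u} \<or> finite {u\<in>U. y \<in> u \<and> x \<notin> u})"

definition gamma_cover :: "real set \<Rightarrow> real set set \<Rightarrow> bool" where
  "gamma_cover X U \<longleftrightarrow> is_cover X U \<and> infinite U \<and>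
     (\<forall>x\<in>X. finite {u\<in>U. x \<notin> u})"

definition OmegaC :: "real set \<Rightarrow> real set set set" where
  "OmegaC X = {U. omega_cover X U \<and> (\<forall>u\<in>U. openin (top_of_set X) u)}"

definition GammaC :: "real set \<Rightarrow> real set set set" where
  "GammaC X = {U. gamma_cover X U \<and> (\<forall>u\<in>U. openin (top_of_set X) u)}"

definition CT :: "real set \<Rightarrow> real set set set" where
  "CT X = {U. countable U \<and> tau_cover X U \<and>
              (\<forall>u\<in>U. openin (top_of_set X) u \<and> closedin (top_of_set X) u)}"

definition binom :: "(real set \<Rightarrow> real set set set) \<Rightarrow> (real set \<Rightarrow> real set set set) \<Rightarrow> real set \<Rightarrow> bool" where
  "binom A B X \<longleftrightarrow> (\<forall>U\<in>A X. \<exists>V. V \<subseteq> U \<and> V \<in> B X)"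

definition Split :: "(real set \<Rightarrow> real set set set) \<Rightarrow> (real set \<Rightarrow> real set set set) \<Rightarrow> real set \<Rightarrow> bool" where
  "Split A B X \<longleftrightarrow> (\<forall>U\<in>A X. \<exists>U1 U2. U1 \<union> U2 = U \<and> U1 \<inter> U2 = {} \<and>
      (\<exists>V. V \<subseteq> U1 \<and> V \<in> B X) \<and> (\<exists>V. V \<subseteq> U2 \<and> V \<in> B X))"

end

theory Submission
  imports Defs
begin

(* X consists of the finite subsets of nat and of a tower (tower r) of infinite sets, decreasing
   modulo finite sets, all placed in the reals by the Cantor embedding; Q is the set of finite sets.
   The tower is built by a recursion of length c that uses p = c at each stage to find a
   pseudointersection of the fewer than c earlier elements. Stage r handles the r-th set a of
   naturals twice over: the new element decides a (it is almost contained in a or almost disjoint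
   from it), and if a indexes, through a coding of the clopen sets, a family that is an omega-family
   for the finite sets and the earlier elements, then an infinite subfamily is a gamma-family for
   them and for every set almost contained in the new element. This extension is possible because
   the finite sets force the subfamily to contain all subsets of {..<j}, for each j, from some point
   on. Hence every open omega-cover of X has a gamma-subcover. On X - Q the clopen sets
   {t. m \<in> t} form a tau-cover; if it split into two tau-covers, indexed by B and its complement,
   the element deciding B would meet both B and its complement in infinite sets. *)

unbundle cardinal_syntax

section \<open>The Cantor set in the reals\<close>

definition cantor_digit :: "nat set \<Rightarrow> nat \<Rightarrow> real" where
  "cantor_digit y n = (if n \<in> y then 2 / 3 ^ Suc n else 0)"

definition cantor_real :: "nat set \<Rightarrow> real" where
  "cantor_real y = (\<Sum>n. cantor_digit y n)"

lemma sums_cantor_tail: "(\<lambda>n. 2 / 3 ^ Suc (n + k) :: real) sums (1 / 3 ^ k)"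
proof -
  have "(\<lambda>n. 2 / 3 ^ Suc k * (1 / 3) ^ n :: real) sums (2 / 3 ^ Suc k * (1 / (1 - 1 / 3)))"
    by (intro sums_mult geometric_sums) simp
  then show ?thesis
    by (simp add: power_add power_one_over field_simps)
qed

lemma summable_cantor_digit: "summable (cantor_digit y)"
  by (rule summable_comparison_test'[OF sums_summable[OF sums_cantor_tail[of 0]]])
     (simp add: cantor_digit_def)

lemma cantor_real_diff_split:
  "cantor_real y - cantor_real y' =
     (\<Sum>n. cantor_digit y (n + k) - cantor_digit y' (n + k)) + (\<Sum>i<k. cantor_digit y i - cantor_digit y' i)"
proof -
  have "summable (\<lambda>n. cantor_digit y n - cantor_digit y' n)"
    by (intro summable_diff summable_cantor_digit)
  from suminf_split_initial_segment[OF this, of k] show ?thesis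
    by (simp add: cantor_real_def suminf_diff summable_cantor_digit)
qed

lemma abs_cantor_tail_le: "\<bar>\<Sum>n. cantor_digit y (n + k) - cantor_digit y' (n + k)\<bar> \<le> 1 / 3 ^ k"
proof -
  have "norm (\<Sum>n. cantor_digit y (n + k) - cantor_digit y' (n + k)) \<le> (\<Sum>n. 2 / 3 ^ Suc (n + k))"
    by (rule norm_suminf_le[OF _ sums_summable[OF sums_cantor_tail]]) (simp add: cantor_digit_def)
  then show ?thesis
    using sums_unique[OF sums_cantor_tail[of k]] by simp
qed

lemma cantor_prefix_sum_eq_0:
  "y \<inter> {..<k} = y' \<inter> {..<k} \<Longrightarrow> (\<Sum>i<k. cantor_digit y i - cantor_digit y' i) = 0"
  by (intro sum.neutral) (auto simp: cantor_digit_def)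

lemma cantor_real_close:
  assumes "y \<inter> {..<k} = y' \<inter> {..<k}"
  shows "\<bar>cantor_real y - cantor_real y'\<bar> \<le> 1 / 3 ^ k"
  using cantor_real_diff_split[of y y' k] abs_cantor_tail_le[of y k y']
  by (simp add: cantor_prefix_sum_eq_0[OF assms])

lemma cantor_real_first_difference:
  assumes "m \<in> y" "m \<notin> y'" "y \<inter> {..<m} = y' \<inter> {..<m}"
  shows "cantor_real y - cantor_real y' \<ge> 1 / 3 ^ Suc m"
proof -
  have "(\<Sum>i<Suc m. cantor_digit y i - cantor_digit y' i) = 2 / 3 ^ Suc m"
    using cantor_prefix_sum_eq_0[OF assms(3)] assms(1,2) by (simp add: cantor_digit_def)
  then show ?thesis
    using cantor_real_diff_split[of y y' "Suc m"] abs_cantor_tail_le[of y "Suc m" y'] by simp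
qed

lemma cantor_real_far:
  assumes "y \<inter> {..<k} \<noteq> y' \<inter> {..<k}"
  shows "\<bar>cantor_real y - cantor_real y'\<bar> \<ge> 1 / 3 ^ k"
proof -
  define m where "m = (LEAST m. (m \<in> y) \<noteq> (m \<in> y'))"
  obtain m0 where m0: "m0 < k" "(m0 \<in> y) \<noteq> (m0 \<in> y')"
    using assms by blast
  have m: "(m \<in> y) \<noteq> (m \<in> y')"
    unfolding m_def by (rule LeastI[of _ m0]) (rule m0(2))
  have "m \<le> m0"
    unfolding m_def by (rule Least_le) (rule m0(2))
  with m0(1) have "m < k" by simp
  have below: "y \<inter> {..<m} = y' \<inter> {..<m}"
    using not_less_Least unfolding m_def by blast
  have "(1 / 3 ^ k :: real) \<le> 1 / 3 ^ Suc m"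
    using \<open>m < k\<close> by (intro divide_left_mono power_increasing) auto
  moreover have "1 / 3 ^ Suc m \<le> \<bar>cantor_real y - cantor_real y'\<bar>"
    using m cantor_real_first_difference[of m y y'] cantor_real_first_difference[of m y' y] below
    by (cases "m \<in> y") auto
  ultimately show ?thesis by linarith
qed

lemma inj_cantor_real: "inj cantor_real"
proof (rule injI, rule ccontr)
  fix y y' assume "cantor_real y = cantor_real y'" "y \<noteq> y'"
  then obtain m where "y \<inter> {..<Suc m} \<noteq> y' \<inter> {..<Suc m}" by blast
  then have "1 / 3 ^ Suc m \<le> \<bar>cantor_real y - cantor_real y'\<bar>"
    by (rule cantor_real_far)
  moreover have "(0::real) < 1 / 3 ^ Suc m" by simp
  moreover have "\<bar>cantor_real y - cantor_real y'\<bar> = 0"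
    using \<open>cantor_real y = cantor_real y'\<close> by simp
  ultimately show False by linarith
qed

lemma openin_cantor_cylinder:
  "openin (top_of_set (cantor_real ` Z)) (cantor_real ` {y\<in>Z. y \<inter> {..<k} \<in> S})"
  unfolding openin_euclidean_subtopology_iff
proof (intro conjI ballI)
  fix x assume "x \<in> cantor_real ` {y\<in>Z. y \<inter> {..<k} \<in> S}"
  then obtain y where y: "y \<in> Z" "y \<inter> {..<k} \<in> S" "x = cantor_real y" by blast
  have "x' \<in> cantor_real ` {y\<in>Z. y \<inter> {..<k} \<in> S}"
    if x': "x' \<in> cantor_real ` Z" "dist x' x < 1 / 3 ^ k" for x'
  proof -
    obtain y' where y': "y' \<in> Z" "x' = cantor_real y'"
      using x'(1) by blast
    with x'(2) y(3) have "\<bar>cantor_real y' - cantor_real y\<bar> < 1 / 3 ^ k"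
      by (simp add: dist_real_def)
    then have "y' \<inter> {..<k} = y \<inter> {..<k}"
      using cantor_real_far by fastforce
    with y' y(2) show ?thesis by auto
  qed
  then show "\<exists>e>0. \<forall>x'\<in>cantor_real ` Z. dist x' x < e \<longrightarrow> x' \<in> cantor_real ` {y\<in>Z. y \<inter> {..<k} \<in> S}"
    by (intro exI[of _ "1 / 3 ^ k"]) auto
qed auto

lemma clopen_cantor_bit:
  "openin (top_of_set (cantor_real ` Z)) (cantor_real ` {y\<in>Z. m \<in> y})"
  "closedin (top_of_set (cantor_real ` Z)) (cantor_real ` {y\<in>Z. m \<in> y})"
proof -
  have bit: "{y\<in>Z. (m \<in> y) = b} = {y\<in>Z. y \<inter> {..<Suc m} \<in> {s. (m \<in> s) = b}}" for b
    by auto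
  show "openin (top_of_set (cantor_real ` Z)) (cantor_real ` {y\<in>Z. m \<in> y})"
    using openin_cantor_cylinder[of Z "Suc m" "{s. m \<in> s}"] bit[of True] by simp
  have "cantor_real ` Z - cantor_real ` {y\<in>Z. m \<in> y} = cantor_real ` {y\<in>Z. (m \<in> y) = False}"
    using inj_cantor_real by (auto simp: inj_eq)
  then show "closedin (top_of_set (cantor_real ` Z)) (cantor_real ` {y\<in>Z. m \<in> y})"
    using openin_cantor_cylinder[of Z "Suc m" "{s. m \<notin> s}"] bit[of False]
    unfolding closedin_def by auto
qed

lemma openin_cantor_neighbourhood:
  assumes "openin (top_of_set (cantor_real ` Z)) u" "y \<in> Z" "cantor_real y \<in> u"
  obtains k where "\<And>y'. y' \<in> Z \<Longrightarrow> y' \<inter> {..<k} = y \<inter> {..<k} \<Longrightarrow> cantor_real y' \<in> u"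
proof -
  obtain e where e: "e > 0" "\<And>x'. x' \<in> cantor_real ` Z \<Longrightarrow> dist x' (cantor_real y) < e \<Longrightarrow> x' \<in> u"
    using assms unfolding openin_euclidean_subtopology_iff by meson
  obtain k where "(1 / 3) ^ k < e"
    using real_arch_pow_inv[OF e(1), of "1 / 3"] by auto
  then have "1 / 3 ^ k < e" by (simp add: power_one_over)
  have "cantor_real y' \<in> u" if "y' \<in> Z" "y' \<inter> {..<k} = y \<inter> {..<k}" for y'
  proof (rule e(2))
    show "cantor_real y' \<in> cantor_real ` Z" using that(1) by blast
    show "dist (cantor_real y') (cantor_real y) < e"
      using cantor_real_close[OF that(2)] \<open>1 / 3 ^ k < e\<close> by (simp add: dist_real_def)
  qed
  then show ?thesis by (rule that)
qed

lemma prefix_eq_mono: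
  fixes y y' :: "nat set"
  assumes "y \<inter> {..<k} = y' \<inter> {..<k}" "j \<le> k"
  shows "y \<inter> {..<j} = y' \<inter> {..<j}"
proof -
  have "y \<inter> {..<j} = y \<inter> {..<k} \<inter> {..<j}" "y' \<inter> {..<j} = y' \<inter> {..<k} \<inter> {..<j}"
    using assms(2) by auto
  with assms(1) show ?thesis by simp
qed

lemma openin_cantor_uniform_neighbourhood:
  assumes "openin (top_of_set (cantor_real ` Z)) u" "finite F" "F \<subseteq> Z" "cantor_real ` F \<subseteq> u"
  obtains k where "\<And>y y'. y \<in> F \<Longrightarrow> y' \<in> Z \<Longrightarrow> y' \<inter> {..<k} = y \<inter> {..<k} \<Longrightarrow> cantor_real y' \<in> u"
proof -
  have "\<forall>y\<in>F. \<exists>k. \<forall>y'\<in>Z. y' \<inter> {..<k} = y \<inter> {..<k} \<longrightarrow> cantor_real y' \<in> u"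
  proof
    fix y assume "y \<in> F"
    with assms(3,4) have "y \<in> Z" "cantor_real y \<in> u"
      by auto
    then show "\<exists>k. \<forall>y'\<in>Z. y' \<inter> {..<k} = y \<inter> {..<k} \<longrightarrow> cantor_real y' \<in> u"
      by (rule openin_cantor_neighbourhood[OF assms(1)]) blast
  qed
  then have "\<exists>kf. \<forall>y\<in>F. \<forall>y'\<in>Z. y' \<inter> {..<kf y} = y \<inter> {..<kf y} \<longrightarrow> cantor_real y' \<in> u"
    by (rule bchoice)
  then obtain kf where kf: "\<forall>y\<in>F. \<forall>y'\<in>Z. y' \<inter> {..<kf y} = y \<inter> {..<kf y} \<longrightarrow> cantor_real y' \<in> u"
    by blast
  have "cantor_real y' \<in> u"
    if y: "y \<in> F" "y' \<in> Z" "y' \<inter> {..<sum kf F} = y \<inter> {..<sum kf F}" for y y'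
  proof -
    have "kf y \<le> sum kf F"
      by (rule member_le_sum[OF y(1) _ assms(2)]) simp
    then have "y' \<inter> {..<kf y} = y \<inter> {..<kf y}"
      by (rule prefix_eq_mono[OF y(3)])
    with kf y(1,2) show ?thesis
      by blast
  qed
  then show ?thesis
    by (rule that)
qed

section \<open>Pseudointersections under \<open>p = c\<close>\<close>

definition strong_fip :: "nat set set \<Rightarrow> bool" where
  "strong_fip F \<longleftrightarrow> (\<forall>y\<in>F. infinite y) \<and> (\<forall>G. finite G \<and> G \<noteq> {} \<and> G \<subseteq> F \<longrightarrow> infinite (\<Inter>G))"

lemma pseudointersection_if_p_eq_c:
  assumes "p_eq_c" "strong_fip F" "|F| <o |UNIV::real set|"
  shows "\<exists>a. infinite a \<and> (\<forall>y\<in>F. finite (a - y))"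
proof (rule ccontr)
  assume "\<not> ?thesis"
  with assms(2) have "p_family F"
    by (auto simp: p_family_def strong_fip_def)
  obtain F0 :: "nat set set" where F0: "|F0| =o |UNIV::real set|" "\<forall>G. p_family G \<longrightarrow> |F0| \<le>o |G|"
    using assms(1) unfolding p_eq_c_def by blast
  from F0(2) \<open>p_family F\<close> have "|F0| \<le>o |F|" by blast
  from this assms(3) have "|F0| <o |UNIV::real set|"
    by (rule ordLeq_ordLess_trans)
  then have "|F0| <o |F0|"
    using ordLess_ordIso_trans ordIso_symmetric[OF F0(1)] by blast
  then show False
    using ordLess_irreflexive by blast
qed

lemma countable_ordLess_continuum:
  assumes "countable A"
  shows "|A| <o |UNIV::real set|"
proof -
  have "\<not> |UNIV::real set| \<le>o |A|"
  proof
    assume "|UNIV::real set| \<le>o |A|"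
    then obtain f :: "real \<Rightarrow> _" where "inj f" "range f \<subseteq> A"
      unfolding card_of_ordLeq[symmetric] by blast
    have "countable (range f)"
      using \<open>range f \<subseteq> A\<close> assms by (rule countable_subset)
    then have "countable (UNIV :: real set)"
      using \<open>inj f\<close> by (rule countable_image_inj_on)
    then show False
      using uncountable_UNIV_real by blast
  qed
  then show ?thesis
    using not_ordLeq_iff_ordLess[OF card_of_Well_order card_of_Well_order] by blast
qed

lemma finite_Diff_trans: "finite (A - B) \<Longrightarrow> finite (B - C) \<Longrightarrow> finite (A - C)"
  by (rule finite_subset[of _ "(A - B) \<union> (B - C)"]) auto

lemma almost_least_element:
  assumes chain: "\<forall>s\<in>T. \<forall>t\<in>T. finite (s - t) \<or> finite (t - s)"
    and "finite G" "G \<noteq> {}" "G \<subseteq> T"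
  shows "\<exists>m\<in>G. \<forall>g\<in>G. finite (m - g)"
  using assms(2-4)
proof (induction G rule: finite_ne_induct)
  case (insert x G)
  then obtain m where m: "m \<in> G" "\<forall>g\<in>G. finite (m - g)"
    by auto
  from chain insert.prems m(1) have "finite (x - m) \<or> finite (m - x)"
    by blast
  then show ?case
  proof
    assume "finite (x - m)"
    then have "\<forall>g\<in>insert x G. finite (x - g)"
      using m(2) finite_Diff_trans[of x m] by auto
    then show ?case by blast
  qed (use m in blast)
qed simp

lemma strong_fip_if_almost_chain:
  assumes "\<forall>t\<in>T. infinite t" "\<forall>s\<in>T. \<forall>t\<in>T. finite (s - t) \<or> finite (t - s)"
  shows "strong_fip T"
  unfolding strong_fip_def
proof (intro conjI allI impI)
  fix G assume G: "finite G \<and> G \<noteq> {} \<and> G \<subseteq> T"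
  then obtain m where m: "m \<in> G" "\<forall>g\<in>G. finite (m - g)"
    using almost_least_element[OF assms(2)] by blast
  have "m \<subseteq> \<Inter>G \<union> (\<Union>g\<in>G. m - g)" by blast
  moreover have "finite (\<Union>g\<in>G. m - g)"
    using G m(2) by (intro finite_UN_I) auto
  moreover have "infinite m"
    using m(1) G assms(1) by blast
  ultimately show "infinite (\<Inter>G)"
    by (meson finite_UnI finite_subset)
qed (use assms(1) in blast)

section \<open>Codes for clopen sets\<close>

definition cylinder :: "nat \<Rightarrow> nat set set \<Rightarrow> nat set set" where
  "cylinder k S = {y. y \<inter> {..<k} \<in> S}"

text \<open>A code \<open>n\<close> is read as an element of \<open>nat \<times> nat list list\<close>: a level \<open>k\<close> and a finite
  family \<open>S\<close> of finite sets, denoting \<open>cylinder k S\<close>.\<close>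

definition clopen_level :: "nat \<Rightarrow> nat" where
  "clopen_level n = fst (from_nat n :: nat \<times> nat list list)"

definition basic_clopen :: "nat \<Rightarrow> nat set set" where
  "basic_clopen n = cylinder (clopen_level n) (set (map set (snd (from_nat n :: nat \<times> nat list list))))"

lemma basic_clopen_surj:
  assumes "finite S" "\<forall>s\<in>S. finite s"
  shows "\<exists>n. basic_clopen n = cylinder k S"
proof -
  obtain xs where xs: "set xs = S"
    using finite_list assms(1) by blast
  have "set (map set (map sorted_list_of_set xs)) = S"
    using xs assms(2) by (auto simp: image_image)
  then have "basic_clopen (to_nat (k, map sorted_list_of_set xs)) = cylinder k S"
    by (simp add: basic_clopen_def clopen_level_def)
  then show ?thesis ..
qed

lemma basic_clopen_gap:
  assumes "Pow {..<j} \<subseteq> basic_clopen n" "y \<inter> {j..<clopen_level n} = {}"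
  shows "y \<in> basic_clopen n"
proof -
  have "x < j" if "x \<in> y" "x < clopen_level n" for x
    using assms(2) that by (auto simp: disjoint_iff)
  then have "y \<inter> {..<j} \<inter> {..<clopen_level n} = y \<inter> {..<clopen_level n}"
    by auto
  moreover have "y \<inter> {..<j} \<in> basic_clopen n"
    using assms(1) by (rule subsetD) simp
  ultimately show ?thesis
    by (simp add: basic_clopen_def cylinder_def)
qed

definition omega_codes :: "nat set set \<Rightarrow> nat set \<Rightarrow> bool" where
  "omega_codes Y A \<longleftrightarrow> (\<forall>F. finite F \<and> F \<subseteq> Y \<longrightarrow> infinite {n\<in>A. F \<subseteq> basic_clopen n})"

definition gamma_codes :: "nat set set \<Rightarrow> nat set \<Rightarrow> bool" where
  "gamma_codes Y K \<longleftrightarrow> (\<forall>y\<in>Y. finite {n\<in>K. y \<notin> basic_clopen n})"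

lemma omega_codes_mono: "omega_codes Y A \<Longrightarrow> Y' \<subseteq> Y \<Longrightarrow> omega_codes Y' A"
  unfolding omega_codes_def by (meson subset_trans)

lemma gamma_codes_Un: "gamma_codes Y K \<Longrightarrow> gamma_codes Y' K \<Longrightarrow> gamma_codes (Y \<union> Y') K"
  unfolding gamma_codes_def by auto

lemma gamma_codes_hit:
  assumes "gamma_codes Y K" "y \<in> Y" "K' \<subseteq> K" "infinite K'"
  shows "\<exists>n\<in>K'. y \<in> basic_clopen n"
proof -
  have "finite {n\<in>K. y \<notin> basic_clopen n}"
    using assms(1,2) unfolding gamma_codes_def by blast
  with assms(4) have "infinite (K' - {n\<in>K. y \<notin> basic_clopen n})"
    by (rule Diff_infinite_finite[rotated])
  then obtain n where "n \<in> K'" "n \<notin> {n\<in>K. y \<notin> basic_clopen n}"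
    using infinite_imp_nonempty by blast
  with assms(3) show ?thesis
    by blast
qed

lemma gamma_codes_mono:
  assumes "gamma_codes Y K" "Y' \<subseteq> Y" "K' \<subseteq> K"
  shows "gamma_codes Y' K'"
  unfolding gamma_codes_def
proof
  fix y assume "y \<in> Y'"
  with assms(1,2) have "finite {n\<in>K. y \<notin> basic_clopen n}"
    unfolding gamma_codes_def by blast
  then show "finite {n\<in>K'. y \<notin> basic_clopen n}"
    by (rule finite_subset[rotated]) (use assms(3) in blast)
qed

lemma gamma_codes_almost_subset:
  assumes "gamma_codes {y. finite (y - w)} K" "finite (b - w)"
  shows "gamma_codes {y. finite (y - b)} K"
  using assms(1) by (rule gamma_codes_mono) (auto intro: finite_Diff_trans[OF _ assms(2)])

lemma strong_fip_omega_codes: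
  assumes "omega_codes Y A"
  shows "strong_fip (insert A ((\<lambda>y. {n\<in>A. y \<in> basic_clopen n}) ` Y))"
proof -
  define S where "S y = {n\<in>A. y \<in> basic_clopen n}" for y
  have infinite_Inter_S: "infinite (\<Inter>(insert A (S ` F)))" if "finite F" "F \<subseteq> Y" for F
  proof -
    have "\<Inter>(insert A (S ` F)) = {n\<in>A. F \<subseteq> basic_clopen n}"
      by (auto simp: S_def)
    with assms that show ?thesis
      unfolding omega_codes_def by simp
  qed
  have "strong_fip (insert A (S ` Y))"
    unfolding strong_fip_def
  proof (intro conjI allI impI ballI)
    fix t assume "t \<in> insert A (S ` Y)"
    then consider "t = A" | y where "y \<in> Y" "t = S y"
      by blast
    then show "infinite t"
    proof cases
      case 2
      moreover have "A \<inter> S y = S y"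
        by (auto simp: S_def)
      ultimately show ?thesis
        using infinite_Inter_S[of "{y}"] by simp
    qed (use infinite_Inter_S[of "{}"] in simp)
  next
    fix G assume G: "finite G \<and> G \<noteq> {} \<and> G \<subseteq> insert A (S ` Y)"
    then have "finite (G - {A})" "G - {A} \<subseteq> S ` Y"
      by auto
    then obtain F where F: "F \<subseteq> Y" "finite F" "G - {A} = S ` F"
      using finite_subset_image by metis
    then have "\<Inter>(insert A (S ` F)) \<subseteq> \<Inter>G"
      by (intro Inter_anti_mono) auto
    with infinite_Inter_S[OF F(2,1)] show "infinite (\<Inter>G)"
      using finite_subset by blast
  qed
  then show ?thesis
    by (simp add: S_def)
qed

lemma gamma_codes_subset_if_p_eq_c:
  assumes "p_eq_c" "|Y| <o |UNIV::real set|" "omega_codes Y A"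
  shows "\<exists>K\<subseteq>A. infinite K \<and> gamma_codes Y K"
proof -
  define S where "S y = {n\<in>A. y \<in> basic_clopen n}" for y
  have "|insert A (S ` Y)| <o |UNIV::real set|"
  proof -
    have "|S ` Y| <o |UNIV::real set|"
      using card_of_image assms(2) by (rule ordLeq_ordLess_trans)
    moreover have "|{A}| <o |UNIV::real set|"
      by (simp add: countable_ordLess_continuum)
    ultimately have "|{A} \<union> S ` Y| <o |UNIV::real set|"
      using card_of_Un_ordLess_infinite infinite_UNIV_char_0 by blast
    then show ?thesis by simp
  qed
  then obtain K0 where K0: "infinite K0" "\<forall>t\<in>insert A (S ` Y). finite (K0 - t)"
    using pseudointersection_if_p_eq_c[OF assms(1)] strong_fip_omega_codes[OF assms(3)]
    unfolding S_def by blast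
  have "infinite (K0 - (K0 - A))"
    using K0 by (intro Diff_infinite_finite) auto
  then have "infinite (K0 \<inter> A)"
    by (simp add: Diff_Diff_Int)
  moreover have "gamma_codes Y (K0 \<inter> A)"
    unfolding gamma_codes_def
  proof
    fix y assume "y \<in> Y"
    then have "finite (K0 - S y)"
      using K0(2) by blast
    then show "finite {n\<in>K0 \<inter> A. y \<notin> basic_clopen n}"
      by (rule finite_subset[rotated]) (auto simp: S_def)
  qed
  ultimately show ?thesis by blast
qed

lemma gamma_codes_Pow:
  assumes "gamma_codes {y. finite y} K"
  shows "finite {n\<in>K. \<not> Pow {..<j} \<subseteq> basic_clopen n}"
proof -
  have "{n\<in>K. \<not> Pow {..<j} \<subseteq> basic_clopen n} = (\<Union>s\<in>Pow {..<j}. {n\<in>K. s \<notin> basic_clopen n})"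
    by auto
  moreover have "finite {n\<in>K. s \<notin> basic_clopen n}" if "s \<in> Pow {..<j}" for s
  proof -
    from that have "finite s"
      by (auto intro: finite_subset)
    with assms show ?thesis
      unfolding gamma_codes_def by simp
  qed
  ultimately show ?thesis by simp
qed

lemma diagonal_code_sequence:
  assumes "infinite P" "infinite K" "\<And>j. finite {n\<in>K. \<not> Pow {..<j} \<subseteq> basic_clopen n}"
  obtains q c where "\<And>i. q i \<in> P" "\<And>i. c i \<in> K" "\<And>i. Pow {..<Suc (q i)} \<subseteq> basic_clopen (c i)"
    "\<And>i. Suc (q i) \<le> q (Suc i)" "\<And>i. clopen_level (c i) \<le> q (Suc i)" "strict_mono c"
proof -
  have code_above: "\<exists>n. n \<in> K \<and> N \<le> n \<and> Pow {..<j} \<subseteq> basic_clopen n" for j N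
  proof -
    have "infinite (K - {n\<in>K. \<not> Pow {..<j} \<subseteq> basic_clopen n})"
      using assms(2,3) by (rule Diff_infinite_finite[rotated])
    then obtain n where "n \<in> K - {n\<in>K. \<not> Pow {..<j} \<subseteq> basic_clopen n}" "N \<le> n"
      using infinite_nat_iff_unbounded_le by meson
    then show ?thesis by auto
  qed
  have point_above: "\<exists>q. q \<in> P \<and> N \<le> q" for N
    using assms(1) infinite_nat_iff_unbounded_le by meson
  define good where
    "good x \<longleftrightarrow> fst x \<in> P \<and> snd x \<in> K \<and> Pow {..<Suc (fst x)} \<subseteq> basic_clopen (snd x)" for x
  define step where
    "step x x' \<longleftrightarrow> Suc (fst x) \<le> fst x' \<and> clopen_level (snd x) \<le> fst x' \<and> snd x < snd x'" for x x'
  have step_exists: "\<exists>x'. good x' \<and> step x x'" for x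
  proof -
    obtain q' where "q' \<in> P" "max (Suc (fst x)) (clopen_level (snd x)) \<le> q'"
      using point_above by blast
    moreover obtain n' where "n' \<in> K" "Suc (snd x) \<le> n'" "Pow {..<Suc q'} \<subseteq> basic_clopen n'"
      using code_above by blast
    ultimately have "good (q', n') \<and> step x (q', n')"
      by (simp add: good_def step_def)
    then show ?thesis ..
  qed
  then have "\<exists>x. good x"
    by blast
  then obtain f where f: "\<And>i. good (f i)" "\<And>i. step (f i) (f (Suc i))"
    using dependent_nat_choice[of "\<lambda>_. good" "\<lambda>_. step"] step_exists by metis
  show ?thesis
  proof (rule that[of "\<lambda>i. fst (f i)" "\<lambda>i. snd (f i)"])
    show "strict_mono (\<lambda>i. snd (f i))"
      using f(2) by (intro strict_monoI_Suc) (simp add: step_def)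
  qed (use f in \<open>simp_all add: good_def step_def\<close>)
qed

lemma gamma_codes_avoiding_gaps:
  fixes q c :: "nat \<Rightarrow> nat"
  assumes "strict_mono q" "\<And>i. Pow {..<Suc (q i)} \<subseteq> basic_clopen (c i)"
  defines "G \<equiv> \<Union>i. {Suc (q i)..<clopen_level (c i)}"
  shows "gamma_codes {y. finite (y \<inter> G)} (range c)"
  unfolding gamma_codes_def
proof
  fix y assume "y \<in> {y. finite (y \<inter> G)}"
  then have "finite (\<Union>m\<in>y \<inter> G. {..<m})"
    by simp
  moreover have "{n\<in>range c. y \<notin> basic_clopen n} \<subseteq> c ` (\<Union>m\<in>y \<inter> G. {..<m})"
  proof
    fix n assume "n \<in> {n\<in>range c. y \<notin> basic_clopen n}"
    then obtain i where i: "n = c i" "y \<notin> basic_clopen (c i)"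
      by blast
    have "y \<inter> {Suc (q i)..<clopen_level (c i)} \<noteq> {}"
    proof
      assume "y \<inter> {Suc (q i)..<clopen_level (c i)} = {}"
      then have "y \<in> basic_clopen (c i)"
        by (rule basic_clopen_gap[OF assms(2)])
      with i(2) show False ..
    qed
    then obtain m where m: "m \<in> y" "m \<in> {Suc (q i)..<clopen_level (c i)}"
      by blast
    moreover have "i < m"
      using seq_suble[OF assms(1), of i] m(2) by simp
    ultimately have "i \<in> (\<Union>m\<in>y \<inter> G. {..<m})"
      unfolding G_def by blast
    with i(1) show "n \<in> c ` (\<Union>m\<in>y \<inter> G. {..<m})"
      by (rule image_eqI)
  qed
  ultimately show "finite {n\<in>range c. y \<notin> basic_clopen n}"
    by (meson finite_imageI finite_subset)
qed

lemma diagonal_gamma_codes: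
  assumes "infinite P" "infinite K" "\<And>j. finite {n\<in>K. \<not> Pow {..<j} \<subseteq> basic_clopen n}"
  shows "\<exists>z K'. K' \<subseteq> K \<and> infinite K' \<and> infinite (P \<inter> z) \<and> gamma_codes {y. finite (y - z)} K'"
proof -
  obtain q c where seq: "\<And>i. q i \<in> P" "\<And>i. c i \<in> K" "\<And>i. Pow {..<Suc (q i)} \<subseteq> basic_clopen (c i)"
    "\<And>i. Suc (q i) \<le> q (Suc i)" "\<And>i. clopen_level (c i) \<le> q (Suc i)" "strict_mono c"
    using diagonal_code_sequence[OF assms] by blast
  have "strict_mono q"
    using seq(4) by (intro strict_monoI_Suc) (simp add: Suc_le_eq)
  define z where "z = - (\<Union>i. {Suc (q i)..<clopen_level (c i)})"
  have "q i \<in> z" for i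
  proof -
    have "q i \<notin> {Suc (q i')..<clopen_level (c i')}" for i'
    proof (cases "i \<le> i'")
      case True
      then have "q i \<le> q i'"
        using \<open>strict_mono q\<close> by (simp add: strict_mono_less_eq)
      then show ?thesis
        by simp
    next
      case False
      then have "q (Suc i') \<le> q i"
        using \<open>strict_mono q\<close> by (simp add: strict_mono_less_eq)
      then show ?thesis
        using seq(5)[of i'] by simp
    qed
    then show ?thesis
      by (simp add: z_def)
  qed
  then have "range q \<subseteq> P \<inter> z"
    using seq(1) by blast
  moreover have "infinite (range q)" "infinite (range c)"
    using \<open>strict_mono q\<close> seq(6) by (simp_all add: range_inj_infinite strict_mono_imp_inj_on)
  moreover have "gamma_codes {y. finite (y - z)} (range c)"
    using gamma_codes_avoiding_gaps[OF \<open>strict_mono q\<close> seq(3)] unfolding z_def Diff_Compl .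
  ultimately show ?thesis
    using seq(2) finite_subset by blast
qed

lemma omega_codes_gamma_refinement:
  assumes "p_eq_c" "|Y| <o |UNIV::real set|" "{y. finite y} \<subseteq> Y" "omega_codes Y A" "infinite P"
  shows "\<exists>z K. K \<subseteq> A \<and> infinite K \<and> infinite (P \<inter> z) \<and> gamma_codes Y K \<and> gamma_codes {y. finite (y - z)} K"
proof -
  obtain K where K: "K \<subseteq> A" "infinite K" "gamma_codes Y K"
    using gamma_codes_subset_if_p_eq_c[OF assms(1,2,4)] by blast
  have "finite {n\<in>K. \<not> Pow {..<j} \<subseteq> basic_clopen n}" for j
    using gamma_codes_mono[OF K(3) assms(3) order.refl] by (rule gamma_codes_Pow)
  then obtain z K' where "K' \<subseteq> K" "infinite K'" "infinite (P \<inter> z)" "gamma_codes {y. finite (y - z)} K'"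
    using diagonal_gamma_codes[OF assms(5) K(2)] by blast
  then show ?thesis
    using K gamma_codes_mono[OF K(3) order.refl] by blast
qed

section \<open>The tower\<close>

lemma infinite_split_deciding:
  assumes "infinite w"
  obtains b c where "b \<subseteq> w" "c \<subseteq> w" "infinite b" "infinite c" "b \<inter> c = {}"
    "finite (b - a) \<or> finite (b \<inter> a)"
proof -
  obtain v where v: "v \<subseteq> w" "infinite v" "v \<subseteq> a \<or> v \<inter> a = {}"
  proof (cases "finite (w \<inter> a)")
    case True
    then have "infinite (w - a)"
      using assms by (metis Int_Diff_Un finite_Un)
    then show ?thesis
      using that[of "w - a"] by blast
  next
    case False
    then show ?thesis
      using that[of "w \<inter> a"] by blast
  qed
  obtain b c where bc: "b \<subseteq> v" "c \<subseteq> v" "infinite b" "infinite c" "b \<inter> c = {}"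
    using infinite_split[OF v(2)] by blast
  show ?thesis
  proof (rule that[of b c])
    have "b - a = {} \<or> b \<inter> a = {}"
      using bc(1) v(3) by blast
    then show "finite (b - a) \<or> finite (b \<inter> a)"
      by (metis finite.emptyI)
  qed (use bc v(1) in auto)
qed

lemma Min_neq_Max_if_card_2:
  fixes a :: "'a::linorder set"
  assumes "card a = 2"
  shows "Min a \<noteq> Max a"
proof -
  obtain i j where "a = {i, j}" "i \<noteq> j"
    using assms by (meson card_2_iff)
  then show ?thesis
    by (cases "i < j") auto
qed

text \<open>The set \<open>a\<close> plays two roles: \<open>b\<close> decides it, and if \<open>a\<close> is a set of codes of an
  \<open>\<omega>\<close>-family, \<open>b\<close> captures a \<open>\<gamma>\<close>-subfamily. The clause on pairs makes the tower separate points.\<close>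

definition tower_step :: "nat set set \<Rightarrow> nat set \<Rightarrow> nat set \<Rightarrow> bool" where
  "tower_step T a b \<longleftrightarrow> infinite b \<and> (\<forall>t\<in>T. finite (b - t) \<and> infinite (t - b)) \<and>
     (finite (b - a) \<or> finite (b \<inter> a)) \<and> (card a = 2 \<longrightarrow> Max a \<in> b \<and> Min a \<notin> b) \<and>
     (omega_codes ({y. finite y} \<union> T) a \<longrightarrow>
        (\<exists>K\<subseteq>a. infinite K \<and> gamma_codes ({y. finite y} \<union> T) K \<and> gamma_codes {y. finite (y - b)} K))"

lemma pseudointersection_with_gamma_codes:
  assumes "p_eq_c" "\<forall>t\<in>T. infinite t" "\<forall>s\<in>T. \<forall>t\<in>T. finite (s - t) \<or> finite (t - s)"
    and "|T| <o |UNIV::real set|"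
  shows "\<exists>w. infinite w \<and> (\<forall>t\<in>T. finite (w - t)) \<and> (omega_codes ({y. finite y} \<union> T) a \<longrightarrow>
           (\<exists>K\<subseteq>a. infinite K \<and> gamma_codes ({y. finite y} \<union> T) K \<and> gamma_codes {y. finite (y - w)} K))"
proof -
  define Y where "Y = {y::nat set. finite y} \<union> T"
  obtain p where p: "infinite p" "\<forall>t\<in>T. finite (p - t)"
    using pseudointersection_if_p_eq_c[OF assms(1) strong_fip_if_almost_chain[OF assms(2,3)] assms(4)]
    by blast
  show ?thesis
  proof (cases "omega_codes Y a")
    case True
    have "|Y| <o |UNIV::real set|"
      unfolding Y_def using countable_ordLess_continuum[OF countable_Collect_finite] assms(4)
      by (intro card_of_Un_ordLess_infinite) (simp_all add: infinite_UNIV_char_0)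
    then obtain z K where "K \<subseteq> a" "infinite K" "infinite (p \<inter> z)" "gamma_codes Y K"
        "gamma_codes {y. finite (y - z)} K"
      using omega_codes_gamma_refinement[OF assms(1) _ _ True p(1)] unfolding Y_def by blast
    moreover have "gamma_codes {y. finite (y - p \<inter> z)} K"
      using \<open>gamma_codes {y. finite (y - z)} K\<close> by (rule gamma_codes_almost_subset) (simp add: Int_Diff)
    moreover have "finite (p \<inter> z - t)" if "t \<in> T" for t
      using p(2) that finite_subset[of "p \<inter> z - t" "p - t"] by blast
    ultimately show ?thesis
      unfolding Y_def by blast
  next
    case False
    with p show ?thesis
      unfolding Y_def by blast
  qed
qed

lemma tower_step_exists:
  assumes "p_eq_c" "\<forall>t\<in>T. infinite t" "\<forall>s\<in>T. \<forall>t\<in>T. finite (s - t) \<or> finite (t - s)"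
    and "|T| <o |UNIV::real set|"
  shows "\<exists>b. tower_step T a b"
proof -
  from pseudointersection_with_gamma_codes[OF assms, of a] obtain w where w: "infinite w" "\<forall>t\<in>T. finite (w - t)"
    "omega_codes ({y. finite y} \<union> T) a \<longrightarrow>
      (\<exists>K\<subseteq>a. infinite K \<and> gamma_codes ({y. finite y} \<union> T) K \<and> gamma_codes {y. finite (y - w)} K)"
    by (elim exE conjE) (rule that)
  obtain b0 c0 where b0: "b0 \<subseteq> w" "c0 \<subseteq> w" "infinite b0" "infinite c0" "b0 \<inter> c0 = {}"
      "finite (b0 - a) \<or> finite (b0 \<inter> a)"
    using infinite_split_deciding[OF w(1)] by blast
  define b where "b = (if card a = 2 then insert (Max a) (b0 - {Min a}) else b0)"
  have b: "b \<subseteq> insert (Max a) b0" "b0 - {Min a} \<subseteq> b"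
    by (auto simp: b_def)
  have "tower_step T a b"
    unfolding tower_step_def
  proof (intro conjI ballI impI)
    have "infinite (b0 - {Min a})"
      using b0(3) by simp
    then show "infinite b"
      using b(2) finite_subset by blast
    fix t assume "t \<in> T"
    with w(2) have "finite (w - t)"
      by blast
    moreover have "b - t \<subseteq> insert (Max a) (w - t)" "c0 - (w - t) - {Max a} \<subseteq> t - b"
      using b(1) b0(1,2,5) by blast+
    moreover have "infinite (c0 - (w - t) - {Max a})"
      using b0(4) \<open>finite (w - t)\<close> by simp
    ultimately show "finite (b - t)" "infinite (t - b)"
      using finite_subset by blast+
  next
    show "finite (b - a) \<or> finite (b \<inter> a)"
      using b0(6) b(1) finite_subset[of "b - a" "insert (Max a) (b0 - a)"]
        finite_subset[of "b \<inter> a" "insert (Max a) (b0 \<inter> a)"] by blast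
  next
    assume "card a = 2"
    with Min_neq_Max_if_card_2[OF this] show "Max a \<in> b" "Min a \<notin> b"
      by (simp_all add: b_def)
  next
    have "finite (b - w)"
      using b(1) b0(1) finite_subset[of "b - w" "{Max a}"] by blast
    then show "\<exists>K\<subseteq>a. infinite K \<and> gamma_codes ({y. finite y} \<union> T) K \<and> gamma_codes {y. finite (y - b)} K"
      if "omega_codes ({y. finite y} \<union> T) a"
      using w(3) that gamma_codes_almost_subset by blast
  qed
  then show ?thesis ..
qed

lemma tower_stepD:
  assumes "tower_step T a b"
  shows "infinite b" "t \<in> T \<Longrightarrow> finite (b - t)" "t \<in> T \<Longrightarrow> infinite (t - b)"
    "finite (b - a) \<or> finite (b \<inter> a)" "card a = 2 \<Longrightarrow> Max a \<in> b" "card a = 2 \<Longrightarrow> Min a \<notin> b"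
    "omega_codes ({y. finite y} \<union> T) a \<Longrightarrow>
       \<exists>K\<subseteq>a. infinite K \<and> gamma_codes ({y. finite y} \<union> T) K \<and> gamma_codes {y. finite (y - b)} K"
  using assms unfolding tower_step_def by blast+

definition earlier :: "real \<Rightarrow> real set" where
  "earlier r = underS |UNIV::real set| r"

lemma wf_earlier: "wf {(s, r). s \<in> earlier r}"
proof -
  have "{(s, r). s \<in> earlier r} = |UNIV::real set| - Id"
    by (auto simp: earlier_def underS_def)
  then show ?thesis
    using wo_rel.WF[unfolded wo_rel_def, OF card_of_Well_order] by metis
qed

lemma earlier_total: "r \<noteq> s \<Longrightarrow> r \<in> earlier s \<or> s \<in> earlier r"
  using wo_rel.TOTALS[unfolded wo_rel_def, OF card_of_Well_order, of "UNIV::real set"]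
  by (auto simp: earlier_def underS_def Field_card_of)

lemma card_earlier: "|earlier r| <o |UNIV::real set|"
  unfolding earlier_def
  using card_of_underS[OF card_of_Card_order, of r "UNIV::real set"] by (simp add: Field_card_of)

text \<open>Stage \<open>r\<close> takes care of the set \<open>inv cantor_real r\<close>; since \<open>cantor_real\<close> is injective,
  every subset of \<open>\<nat>\<close> is taken care of at some stage. The choice is only known to succeed
  under \<open>p_eq_c\<close>, which all properties of \<open>tower\<close> assume.\<close>

definition tower :: "real \<Rightarrow> nat set" where
  "tower = wfrec {(s, r). s \<in> earlier r} (\<lambda>f r. SOME b. tower_step (f ` earlier r) (inv cantor_real r) b)"

lemma tower_eq: "tower r = (SOME b. tower_step (tower ` earlier r) (inv cantor_real r) b)"
proof -
  have "tower r = (SOME b. tower_step (cut tower {(s, r). s \<in> earlier r} r ` earlier r) (inv cantor_real r) b)"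
    unfolding tower_def by (subst wfrec[OF wf_earlier]) simp
  moreover have "cut tower {(s, r). s \<in> earlier r} r ` earlier r = tower ` earlier r"
    by (auto simp: cut_apply)
  ultimately show ?thesis by simp
qed

lemma tower_step_tower_if_earlier:
  assumes "p_eq_c"
    and "\<And>s. s \<in> earlier r \<Longrightarrow> infinite (tower s) \<and> (\<forall>s'\<in>earlier s. finite (tower s - tower s'))"
  shows "tower_step (tower ` earlier r) (inv cantor_real r) (tower r)"
proof -
  have "\<forall>t\<in>tower ` earlier r. infinite t"
    using assms(2) by blast
  moreover have "\<forall>s\<in>tower ` earlier r. \<forall>t\<in>tower ` earlier r. finite (s - t) \<or> finite (t - s)"
  proof (intro ballI)
    fix s t assume "s \<in> tower ` earlier r" "t \<in> tower ` earlier r"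
    then obtain r1 r2 where r12: "r1 \<in> earlier r" "r2 \<in> earlier r" "s = tower r1" "t = tower r2"
      by blast
    consider "r1 = r2" | "r1 \<in> earlier r2" | "r2 \<in> earlier r1"
      using earlier_total by blast
    then show "finite (s - t) \<or> finite (t - s)"
      by cases (use assms(2) r12 in auto)
  qed
  moreover have "|tower ` earlier r| <o |UNIV::real set|"
    using card_of_image card_earlier by (rule ordLeq_ordLess_trans)
  ultimately have "\<exists>b. tower_step (tower ` earlier r) (inv cantor_real r) b"
    by (rule tower_step_exists[OF assms(1)])
  then show ?thesis
    by (subst tower_eq) (rule someI_ex)
qed

lemma tower_almost_decreasing:
  assumes "p_eq_c"
  shows "infinite (tower r) \<and> (\<forall>s\<in>earlier r. finite (tower r - tower s) \<and> infinite (tower s - tower r))"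
proof (induction r rule: wf_induct[OF wf_earlier])
  case (1 r)
  have "tower_step (tower ` earlier r) (inv cantor_real r) (tower r)"
  proof (rule tower_step_tower_if_earlier[OF assms])
    fix s assume "s \<in> earlier r"
    with 1 show "infinite (tower s) \<and> (\<forall>s'\<in>earlier s. finite (tower s - tower s'))"
      by blast
  qed
  then show ?case
    using tower_stepD(1-3) by blast
qed

lemma tower_step_tower:
  assumes "p_eq_c"
  shows "tower_step (tower ` earlier r) (inv cantor_real r) (tower r)"
  by (rule tower_step_tower_if_earlier[OF assms]) (use tower_almost_decreasing[OF assms] in blast)

lemma infinite_tower: "p_eq_c \<Longrightarrow> infinite (tower r)"
  using tower_almost_decreasing by blast

lemma tower_almost_chain:
  assumes "p_eq_c"
  shows "finite (tower r - tower s) \<or> finite (tower s - tower r)"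
proof -
  consider "r = s" | "r \<in> earlier s" | "s \<in> earlier r"
    using earlier_total by blast
  then show ?thesis
    by cases (use tower_almost_decreasing[OF assms] in auto)
qed

lemma inj_tower:
  assumes "p_eq_c"
  shows "inj tower"
proof (rule injI, rule ccontr)
  fix r s assume "tower r = tower s" "r \<noteq> s"
  then consider "r \<in> earlier s" | "s \<in> earlier r"
    using earlier_total by blast
  then have "infinite (tower r - tower s) \<or> infinite (tower s - tower r)"
    by cases (use tower_almost_decreasing[OF assms] in blast)+
  with \<open>tower r = tower s\<close> show False
    by simp
qed

lemma tower_step_at_cantor_real:
  "p_eq_c \<Longrightarrow> tower_step (tower ` earlier (cantor_real a)) a (tower (cantor_real a))"
  using tower_step_tower[of "cantor_real a"] by (simp add: inv_f_f[OF inj_cantor_real])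

lemma tower_decides:
  assumes "p_eq_c"
  shows "\<exists>t\<in>range tower. finite (t - B) \<or> finite (t \<inter> B)"
  using tower_stepD(4)[OF tower_step_at_cantor_real[OF assms]] by blast

lemma tower_separates:
  assumes "p_eq_c" "m < m'"
  shows "\<exists>t\<in>range tower. m' \<in> t \<and> m \<notin> t"
proof -
  have "card {m, m'} = 2" "Max {m, m'} = m'" "Min {m, m'} = m"
    using assms(2) by auto
  then show ?thesis
    using tower_stepD(5,6)[OF tower_step_at_cantor_real[OF assms(1)]] by (metis rangeI)
qed

lemma tower_gamma_codes:
  assumes "p_eq_c" "omega_codes ({y. finite y} \<union> range tower) A"
  shows "\<exists>K\<subseteq>A. infinite K \<and> gamma_codes ({y. finite y} \<union> range tower) K"
proof -
  let ?r = "cantor_real A"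
  have "omega_codes ({y. finite y} \<union> tower ` earlier ?r) A"
    using assms(2) by (rule omega_codes_mono) auto
  then obtain K where K: "K \<subseteq> A" "infinite K" "gamma_codes ({y. finite y} \<union> tower ` earlier ?r) K"
      "gamma_codes {y. finite (y - tower ?r)} K"
    using tower_stepD(7)[OF tower_step_at_cantor_real[OF assms(1)]] by blast
  have "range tower \<subseteq> tower ` earlier ?r \<union> {y. finite (y - tower ?r)}"
  proof
    fix y assume "y \<in> range tower"
    then obtain s where s: "y = tower s" by blast
    consider "s = ?r" | "s \<in> earlier ?r" | "?r \<in> earlier s"
      using earlier_total by blast
    then show "y \<in> tower ` earlier ?r \<union> {y. finite (y - tower ?r)}"
    proof cases
      case 3
      then show ?thesis
        using s tower_almost_decreasing[OF assms(1), of s] by blast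
    qed (use s in auto)
  qed
  then have "gamma_codes ({y. finite y} \<union> range tower) K"
    by (intro gamma_codes_mono[OF gamma_codes_Un[OF K(3,4)]]) auto
  with K(1,2) show ?thesis by blast
qed

section \<open>Covers of subspaces of the Cantor set\<close>

lemma omega_cover_code:
  assumes "U \<in> OmegaC (cantor_real ` Z)" "finite F" "F \<subseteq> Z"
  shows "\<exists>n. F \<subseteq> basic_clopen n \<and> (\<exists>u\<in>U. cantor_real ` (Z \<inter> basic_clopen n) \<subseteq> u)"
proof -
  have "finite (cantor_real ` F)" "cantor_real ` F \<subseteq> cantor_real ` Z"
    using assms(2,3) by auto
  moreover have "omega_cover (cantor_real ` Z) U"
    using assms(1) by (simp add: OmegaC_def)
  ultimately obtain u where u: "u \<in> U" "cantor_real ` F \<subseteq> u"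
    unfolding omega_cover_def by blast
  moreover have "openin (top_of_set (cantor_real ` Z)) u"
    using assms(1) u(1) unfolding OmegaC_def by blast
  ultimately obtain k
    where k: "\<And>y y'. y \<in> F \<Longrightarrow> y' \<in> Z \<Longrightarrow> y' \<inter> {..<k} = y \<inter> {..<k} \<Longrightarrow> cantor_real y' \<in> u"
    using openin_cantor_uniform_neighbourhood[OF _ assms(2,3)] by metis
  have "finite ((\<lambda>y. y \<inter> {..<k}) ` F)" "\<forall>s\<in>(\<lambda>y. y \<inter> {..<k}) ` F. finite s"
    using assms(2) by auto
  from basic_clopen_surj[OF this] obtain n where n: "basic_clopen n = cylinder k ((\<lambda>y. y \<inter> {..<k}) ` F)"
    by blast
  have "cantor_real ` (Z \<inter> basic_clopen n) \<subseteq> u"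
    using k unfolding n cylinder_def by blast
  moreover have "F \<subseteq> basic_clopen n"
    by (auto simp: n cylinder_def)
  ultimately show ?thesis
    using u(1) by blast
qed

lemma omega_cover_omega_codes:
  assumes "U \<in> OmegaC (cantor_real ` Z)"
  shows "omega_codes Z {n. \<exists>u\<in>U. cantor_real ` (Z \<inter> basic_clopen n) \<subseteq> u}" (is "omega_codes Z ?A")
  unfolding omega_codes_def
proof (intro allI impI notI)
  have "\<forall>n\<in>?A. \<exists>y. y \<in> Z \<and> y \<notin> basic_clopen n"
  proof
    fix n assume "n \<in> ?A"
    then obtain u where "u \<in> U" "cantor_real ` (Z \<inter> basic_clopen n) \<subseteq> u"
      by blast
    moreover have "\<not> cantor_real ` Z \<subseteq> u"
      using assms \<open>u \<in> U\<close> unfolding OmegaC_def omega_cover_def is_cover_def by blast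
    ultimately show "\<exists>y. y \<in> Z \<and> y \<notin> basic_clopen n"
      by blast
  qed
  then have "\<exists>pt. \<forall>n\<in>?A. pt n \<in> Z \<and> pt n \<notin> basic_clopen n"
    by (rule bchoice)
  then obtain pt where pt: "\<forall>n\<in>?A. pt n \<in> Z \<and> pt n \<notin> basic_clopen n"
    by blast
  text \<open>If only finitely many codes in \<open>?A\<close> covered \<open>F\<close>, adding the points \<open>pt n\<close> missed by
    them would give a finite set covered by none of them.\<close>
  fix F assume F: "finite F \<and> F \<subseteq> Z" and "finite {n\<in>?A. F \<subseteq> basic_clopen n}"
  then have "finite (F \<union> pt ` {n\<in>?A. F \<subseteq> basic_clopen n})" "F \<union> pt ` {n\<in>?A. F \<subseteq> basic_clopen n} \<subseteq> Z"
    using pt by auto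
  from omega_cover_code[OF assms this] obtain n
    where n: "F \<union> pt ` {n\<in>?A. F \<subseteq> basic_clopen n} \<subseteq> basic_clopen n" "n \<in> ?A"
    by blast
  then have "pt n \<in> basic_clopen n"
    by blast
  with pt n(2) show False
    by blast
qed

lemma gamma_cover_if_gamma_codes:
  assumes K: "gamma_codes Z K" "infinite K"
    and f: "\<And>n. n \<in> K \<Longrightarrow> cantor_real ` (Z \<inter> basic_clopen n) \<subseteq> f n"
      "\<And>n. n \<in> K \<Longrightarrow> f n \<subseteq> cantor_real ` Z" "\<And>n. n \<in> K \<Longrightarrow> \<not> cantor_real ` Z \<subseteq> f n"
  shows "gamma_cover (cantor_real ` Z) (f ` K)"
  unfolding gamma_cover_def is_cover_def
proof (intro conjI ballI)
  have hit: "\<exists>n\<in>K'. cantor_real y \<in> f n" if y: "y \<in> Z" and K': "K' \<subseteq> K" "infinite K'" for y K'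
  proof -
    obtain n where "n \<in> K'" "y \<in> basic_clopen n"
      using gamma_codes_hit[OF K(1) y K'] by blast
    with y K'(1) f(1)[of n] show ?thesis
      by blast
  qed
  show "v \<subseteq> cantor_real ` Z" "\<not> cantor_real ` Z \<subseteq> v" if "v \<in> f ` K" for v
    using that f(2,3) by auto
  show "\<Union>(f ` K) = cantor_real ` Z"
    using f(2) hit[OF _ order.refl K(2)] by auto
  show "infinite (f ` K)"
  proof
    assume "finite (f ` K)"
    then obtain n0 where n0: "n0 \<in> K" "infinite {n\<in>K. f n = f n0}"
      using pigeonhole_infinite[OF K(2)] by blast
    have "cantor_real ` Z \<subseteq> f n0"
    proof
      fix x assume "x \<in> cantor_real ` Z"
      then obtain y where "y \<in> Z" "x = cantor_real y"
        by blast
      with hit[of y "{n\<in>K. f n = f n0}"] n0(2) show "x \<in> f n0"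
        by auto
    qed
    with f(3) n0(1) show False
      by blast
  qed
  fix x assume "x \<in> cantor_real ` Z"
  then obtain y where y: "y \<in> Z" "x = cantor_real y"
    by blast
  have "{v\<in>f ` K. x \<notin> v} \<subseteq> f ` {n\<in>K. y \<notin> basic_clopen n}"
    using f(1) y by blast
  moreover have "finite {n\<in>K. y \<notin> basic_clopen n}"
    using K(1) y(1) unfolding gamma_codes_def by blast
  ultimately show "finite {v\<in>f ` K. x \<notin> v}"
    by (meson finite_imageI finite_subset)
qed

lemma gamma_subcover_if_gamma_codes:
  assumes U: "U \<in> OmegaC (cantor_real ` Z)"
    and K: "K \<subseteq> {n. \<exists>u\<in>U. cantor_real ` (Z \<inter> basic_clopen n) \<subseteq> u}" "infinite K" "gamma_codes Z K"
  shows "\<exists>V\<subseteq>U. V \<in> GammaC (cantor_real ` Z)"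
proof -
  have U_sub: "u \<subseteq> cantor_real ` Z" and U_proper: "\<not> cantor_real ` Z \<subseteq> u"
    and U_open: "openin (top_of_set (cantor_real ` Z)) u" if "u \<in> U" for u
    using U that unfolding OmegaC_def omega_cover_def is_cover_def by auto
  have "\<forall>n\<in>K. \<exists>u. u \<in> U \<and> cantor_real ` (Z \<inter> basic_clopen n) \<subseteq> u"
    using K(1) by blast
  then have "\<exists>f. \<forall>n\<in>K. f n \<in> U \<and> cantor_real ` (Z \<inter> basic_clopen n) \<subseteq> f n"
    by (rule bchoice)
  then obtain f where f: "\<forall>n\<in>K. f n \<in> U \<and> cantor_real ` (Z \<inter> basic_clopen n) \<subseteq> f n"
    by blast
  have "gamma_cover (cantor_real ` Z) (f ` K)"
    using K(3,2) by (rule gamma_cover_if_gamma_codes) (use f U_sub U_proper in blast)+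
  moreover have "f ` K \<subseteq> U"
    using f by blast
  ultimately show ?thesis
    using U_open unfolding GammaC_def by blast
qed

lemma binom_Omega_Gamma_if_gamma_codes:
  assumes "\<And>A. omega_codes Z A \<Longrightarrow> \<exists>K\<subseteq>A. infinite K \<and> gamma_codes Z K"
  shows "binom OmegaC GammaC (cantor_real ` Z)"
  unfolding binom_def
proof
  fix U assume U: "U \<in> OmegaC (cantor_real ` Z)"
  obtain K where "K \<subseteq> {n. \<exists>u\<in>U. cantor_real ` (Z \<inter> basic_clopen n) \<subseteq> u}" "infinite K" "gamma_codes Z K"
    using assms[OF omega_cover_omega_codes[OF U]] by blast
  then show "\<exists>V. V \<subseteq> U \<and> V \<in> GammaC (cantor_real ` Z)"
    using gamma_subcover_if_gamma_codes[OF U] by blast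
qed

definition bit_clopen :: "nat set set \<Rightarrow> nat \<Rightarrow> real set" where
  "bit_clopen T m = cantor_real ` {t\<in>T. m \<in> t}"

lemma cantor_real_in_bit_clopen: "t \<in> T \<Longrightarrow> cantor_real t \<in> bit_clopen T m \<longleftrightarrow> m \<in> t"
  unfolding bit_clopen_def by (simp add: inj_image_mem_iff[OF inj_cantor_real])

lemma inj_bit_clopen:
  assumes "\<And>m m'. m < m' \<Longrightarrow> \<exists>t\<in>T. m' \<in> t \<and> m \<notin> t"
  shows "inj (bit_clopen T)"
proof (rule injI)
  fix m m' assume eq: "bit_clopen T m = bit_clopen T m'"
  have "\<not> k < k'" if "bit_clopen T k = bit_clopen T k'" for k k'
  proof
    assume "k < k'"
    then obtain t where "t \<in> T" "k' \<in> t" "k \<notin> t"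
      using assms by blast
    with that show False
      using cantor_real_in_bit_clopen by metis
  qed
  from this[OF eq] this[OF eq[symmetric]] show "m = m'"
    by simp
qed

lemma is_cover_bit_clopen:
  assumes "\<And>t. t \<in> T \<Longrightarrow> infinite t" "\<And>m m'. m < m' \<Longrightarrow> \<exists>t\<in>T. m' \<in> t \<and> m \<notin> t"
  shows "is_cover (cantor_real ` T) (range (bit_clopen T))"
  unfolding is_cover_def
proof (intro conjI ballI)
  show "u \<subseteq> cantor_real ` T" if "u \<in> range (bit_clopen T)" for u
    using that by (auto simp: bit_clopen_def)
  show "\<not> cantor_real ` T \<subseteq> u" if u: "u \<in> range (bit_clopen T)" for u
  proof -
    obtain m where m: "u = bit_clopen T m"
      using u by blast
    obtain t where "t \<in> T" "m \<notin> t"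
      using assms(2)[of m "Suc m"] by blast
    then show ?thesis
      using m cantor_real_in_bit_clopen by blast
  qed
  show "\<Union>(range (bit_clopen T)) = cantor_real ` T"
  proof
    show "cantor_real ` T \<subseteq> \<Union>(range (bit_clopen T))"
    proof
      fix x assume "x \<in> cantor_real ` T"
      then obtain t where t: "t \<in> T" "x = cantor_real t"
        by blast
      then obtain m where "m \<in> t"
        using assms(1) infinite_imp_nonempty by blast
      with t show "x \<in> \<Union>(range (bit_clopen T))"
        using cantor_real_in_bit_clopen by blast
    qed
  qed (auto simp: bit_clopen_def)
qed

lemma bit_clopen_CT:
  assumes infinite: "\<And>t. t \<in> T \<Longrightarrow> infinite t"
    and chain: "\<And>s t. s \<in> T \<Longrightarrow> t \<in> T \<Longrightarrow> finite (s - t) \<or> finite (t - s)"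
    and separating: "\<And>m m'. m < m' \<Longrightarrow> \<exists>t\<in>T. m' \<in> t \<and> m \<notin> t"
  shows "range (bit_clopen T) \<in> CT (cantor_real ` T)"
  unfolding CT_def tau_cover_def
proof (intro CollectI conjI ballI)
  show "is_cover (cantor_real ` T) (range (bit_clopen T))"
    using infinite separating by (rule is_cover_bit_clopen)
  show "openin (top_of_set (cantor_real ` T)) u" "closedin (top_of_set (cantor_real ` T)) u"
    if "u \<in> range (bit_clopen T)" for u
    using that clopen_cantor_bit by (auto simp: bit_clopen_def)
  fix x assume "x \<in> cantor_real ` T"
  then obtain s where s: "s \<in> T" "x = cantor_real s"
    by blast
  have "bit_clopen T ` s \<subseteq> {u\<in>range (bit_clopen T). x \<in> u}"
    using s cantor_real_in_bit_clopen by blast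
  moreover have "infinite (bit_clopen T ` s)"
    using infinite[OF s(1)] finite_imageD inj_on_subset[OF inj_bit_clopen[OF separating]] by blast
  ultimately show "infinite {u\<in>range (bit_clopen T). x \<in> u}"
    using finite_subset by blast
  fix y assume "y \<in> cantor_real ` T"
  then obtain t where t: "t \<in> T" "y = cantor_real t"
    by blast
  have "{u\<in>range (bit_clopen T). x \<in> u \<and> y \<notin> u} \<subseteq> bit_clopen T ` (s - t)"
    "{u\<in>range (bit_clopen T). y \<in> u \<and> x \<notin> u} \<subseteq> bit_clopen T ` (t - s)"
    using s t cantor_real_in_bit_clopen by blast+
  with chain[OF s(1) t(1)]
  show "finite {u\<in>range (bit_clopen T). x \<in> u \<and> y \<notin> u} \<or> finite {u\<in>range (bit_clopen T). y \<in> u \<and> x \<notin> u}"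
    by (meson finite_imageI finite_subset)
qed (simp)

lemma not_Split_CT_if_unsplit:
  assumes infinite: "\<And>t. t \<in> T \<Longrightarrow> infinite t"
    and chain: "\<And>s t. s \<in> T \<Longrightarrow> t \<in> T \<Longrightarrow> finite (s - t) \<or> finite (t - s)"
    and separating: "\<And>m m'. m < m' \<Longrightarrow> \<exists>t\<in>T. m' \<in> t \<and> m \<notin> t"
    and unsplit: "\<And>B. \<exists>t\<in>T. finite (t - B) \<or> finite (t \<inter> B)"
  shows "\<not> Split CT CT (cantor_real ` T)"
proof
  assume "Split CT CT (cantor_real ` T)"
  then have "\<forall>U\<in>CT (cantor_real ` T). \<exists>U1 U2. U1 \<union> U2 = U \<and> U1 \<inter> U2 = {} \<and>
      (\<exists>V. V \<subseteq> U1 \<and> V \<in> CT (cantor_real ` T)) \<and> (\<exists>V. V \<subseteq> U2 \<and> V \<in> CT (cantor_real ` T))"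
    unfolding Split_def .
  from bspec[OF this bit_clopen_CT[OF assms(1-3)]] obtain U1 U2 V1 V2
    where U: "U1 \<union> U2 = range (bit_clopen T)" "U1 \<inter> U2 = {}"
      and V: "V1 \<subseteq> U1" "V1 \<in> CT (cantor_real ` T)" "V2 \<subseteq> U2" "V2 \<in> CT (cantor_real ` T)"
    by blast
  define B where "B = {m. bit_clopen T m \<in> U1}"
  obtain t where t: "t \<in> T" "finite (t - B) \<or> finite (t \<inter> B)"
    using unsplit by blast
  have "infinite {u\<in>V1. cantor_real t \<in> u}" "infinite {u\<in>V2. cantor_real t \<in> u}"
    using V(2,4) t(1) unfolding CT_def tau_cover_def by blast+
  moreover have "{u\<in>V1. cantor_real t \<in> u} \<subseteq> bit_clopen T ` (t \<inter> B)"
  proof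
    fix u assume u: "u \<in> {u\<in>V1. cantor_real t \<in> u}"
    then obtain m where m: "u = bit_clopen T m"
      using U(1) V(1) by blast
    with u t(1) V(1) show "u \<in> bit_clopen T ` (t \<inter> B)"
      unfolding B_def using cantor_real_in_bit_clopen by blast
  qed
  moreover have "{u\<in>V2. cantor_real t \<in> u} \<subseteq> bit_clopen T ` (t - B)"
  proof
    fix u assume u: "u \<in> {u\<in>V2. cantor_real t \<in> u}"
    then obtain m where m: "u = bit_clopen T m"
      using U(1) V(3) by blast
    with u t(1) U(2) V(3) show "u \<in> bit_clopen T ` (t - B)"
      unfolding B_def using cantor_real_in_bit_clopen by blast
  qed
  ultimately show False
    using t(2) by (meson finite_imageI finite_subset)
qed

lemma not_Split_CT_tower:
  assumes "p_eq_c"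
  shows "\<not> Split CT CT (cantor_real ` range tower)"
proof (rule not_Split_CT_if_unsplit)
  show "infinite t" if "t \<in> range tower" for t
    using that infinite_tower[OF assms] by blast
  show "finite (s - t) \<or> finite (t - s)" if "s \<in> range tower" "t \<in> range tower" for s t
    using that tower_almost_chain[OF assms] by blast
qed (use tower_separates[OF assms] tower_decides[OF assms] in auto)

theorem theorem7p2:
  assumes "p_eq_c"
  shows "\<exists>X :: real set. infinite X \<and> ordIso2 (card_of X) (card_of (UNIV :: real set)) \<and>
           (\<exists>Q. Q \<subseteq> X \<and> countable Q \<and> binom OmegaC GammaC X \<and>
                \<not> Split CT CT (X - Q))"
proof -
  let ?X = "cantor_real ` ({y. finite y} \<union> range tower)"
  let ?Q = "cantor_real ` {y. finite y}"
  have "inj (cantor_real \<circ> tower)"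
    using inj_cantor_real inj_tower[OF assms] by (rule inj_compose)
  then have "|UNIV::real set| \<le>o |?X|"
    unfolding card_of_ordLeq[symmetric] by auto
  then have card_X: "|?X| =o |UNIV::real set|"
    using card_of_mono1[of ?X UNIV] ordIso_iff_ordLeq by blast
  moreover have "infinite ?X"
    using card_of_ordIso_finite[OF card_X] infinite_UNIV_char_0 by blast
  moreover have "binom OmegaC GammaC ?X"
    using tower_gamma_codes[OF assms] by (rule binom_Omega_Gamma_if_gamma_codes)
  moreover have "?X - ?Q = cantor_real ` (({y. finite y} \<union> range tower) - {y. finite y})"
    by (rule image_set_diff[OF inj_cantor_real, symmetric])
  moreover have "({y. finite y} \<union> range tower) - {y. finite y} = range tower"
    using infinite_tower[OF assms] by auto
  moreover have "?Q \<subseteq> ?X" "countable ?Q"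
    by (auto intro: countable_image countable_Collect_finite)
  ultimately show ?thesis
    using not_Split_CT_tower[OF assms] by metis
qed

end
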